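(* Let $\mathcal T$ consist of projective objects and let $f\in\mathcal A(X,Y)$ be an epimorphism in $\mathcal A$. The following are equivalent: (1) $\overline f$ is an epimorphism in $\underline{\mathcal A}$; (2) for every morphism $h:X\to T$ with $T\in\mathcal T$, there is a morphism $\tilde h:X\to h(\ker f)$ that coincides with $h$ on $\ker(f)$. If moreover $\mathcal T$ is covariantly finite, these are also equivalent to: (3) for every (equivalently, for some) $\mathcal T$-preenvelope $\mu^X:X\to T^X$, there is a morphism $\tilde\mu:X\to\mu^X(\ker f)$ that coincides with $\mu^X$ on $\ker(f)$.
   Context: $\mathcal A$ is abelian, $\mathcal T$ a full additive subcategory closed under finite direct sums and direct summands consisting of projective objects; $\underline{\mathcal A}=\mathcal A/\langle\mathcal T\rangle$ is the stable category and $\overline f$ the class of $f$. For a subobject $\kappa:K\hookrightarrow X$ and a morphism $h:X\to T$, $h(K)$ denotes the image of $h\kappa$, with canonical inclusion $j:h(K)\hookrightarrow T$; a morphism $\tilde h:X\to h(K)$ is said to coincide with $h$ on $K$ if $j\tilde h\kappa=h\kappa$. *)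

theory Defs
  imports Main
begin

text \<open>A category with hom-sets, presented concretely.  cmp g f denotes g after f.
  Preadditive structure: madd, mzero, mneg on hom-sets.\<close>

record ('o, 'm) precat =
  Ob    :: "'o set"
  Hom   :: "'o \<Rightarrow> 'o \<Rightarrow> 'm set"
  cmp   :: "'m \<Rightarrow> 'm \<Rightarrow> 'm"
  idm   :: "'o \<Rightarrow> 'm"
  madd  :: "'m \<Rightarrow> 'm \<Rightarrow> 'm"
  mzero :: "'o \<Rightarrow> 'o \<Rightarrow> 'm"
  mneg  :: "'m \<Rightarrow> 'm"

definition category :: "('o, 'm) precat \<Rightarrow> bool" where
  "category C \<longleftrightarrow>
     (\<forall>A\<in>Ob C. idm C A \<in> Hom C A A) \<and>
     (\<forall>A\<in>Ob C. \<forall>B\<in>Ob C. \<forall>D\<in>Ob C. \<forall>f\<in>Hom C A B. \<forall>g\<in>Hom C B D. cmp C g f \<in> Hom C A D) \<and>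
     (\<forall>A\<in>Ob C. \<forall>B\<in>Ob C. \<forall>D\<in>Ob C. \<forall>E\<in>Ob C. \<forall>f\<in>Hom C A B. \<forall>g\<in>Hom C B D. \<forall>h\<in>Hom C D E.
        cmp C h (cmp C g f) = cmp C (cmp C h g) f) \<and>
     (\<forall>A\<in>Ob C. \<forall>B\<in>Ob C. \<forall>f\<in>Hom C A B. cmp C f (idm C A) = f \<and> cmp C (idm C B) f = f)"

definition preadditive :: "('o, 'm) precat \<Rightarrow> bool" where
  "preadditive C \<longleftrightarrow> category C \<and>
     (\<forall>A\<in>Ob C. \<forall>B\<in>Ob C.
        mzero C A B \<in> Hom C A B \<and>
        (\<forall>f\<in>Hom C A B. \<forall>g\<in>Hom C A B. madd C f g \<in> Hom C A B \<and> madd C f g = madd C g f) \<and>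
        (\<forall>f\<in>Hom C A B. \<forall>g\<in>Hom C A B. \<forall>h\<in>Hom C A B. madd C (madd C f g) h = madd C f (madd C g h)) \<and>
        (\<forall>f\<in>Hom C A B. madd C f (mzero C A B) = f \<and> mneg C f \<in> Hom C A B \<and>
                         madd C f (mneg C f) = mzero C A B)) \<and>
     (\<forall>A\<in>Ob C. \<forall>B\<in>Ob C. \<forall>D\<in>Ob C. \<forall>f\<in>Hom C A B. \<forall>f'\<in>Hom C A B. \<forall>g\<in>Hom C B D. \<forall>g'\<in>Hom C B D.
        cmp C g (madd C f f') = madd C (cmp C g f) (cmp C g f') \<and>
        cmp C (madd C g g') f = madd C (cmp C g f) (cmp C g' f))"

definition zero_object :: "('o, 'm) precat \<Rightarrow> 'o \<Rightarrow> bool" where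
  "zero_object C Z \<longleftrightarrow> Z \<in> Ob C \<and>
     (\<forall>A\<in>Ob C. Hom C Z A = {mzero C Z A} \<and> Hom C A Z = {mzero C A Z})"

definition biproduct :: "('o, 'm) precat \<Rightarrow> 'o \<Rightarrow> 'o \<Rightarrow> 'o \<Rightarrow> 'm \<Rightarrow> 'm \<Rightarrow> 'm \<Rightarrow> 'm \<Rightarrow> bool" where
  "biproduct C A B S i1 i2 p1 p2 \<longleftrightarrow> A \<in> Ob C \<and> B \<in> Ob C \<and> S \<in> Ob C \<and>
     i1 \<in> Hom C A S \<and> i2 \<in> Hom C B S \<and> p1 \<in> Hom C S A \<and> p2 \<in> Hom C S B \<and>
     cmp C p1 i1 = idm C A \<and> cmp C p2 i2 = idm C B \<and>
     cmp C p1 i2 = mzero C B A \<and> cmp C p2 i1 = mzero C A B \<and>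
     madd C (cmp C i1 p1) (cmp C i2 p2) = idm C S"

definition mono :: "('o, 'm) precat \<Rightarrow> 'o \<Rightarrow> 'o \<Rightarrow> 'm \<Rightarrow> bool" where
  "mono C A B f \<longleftrightarrow> f \<in> Hom C A B \<and>
     (\<forall>W\<in>Ob C. \<forall>g1\<in>Hom C W A. \<forall>g2\<in>Hom C W A. cmp C f g1 = cmp C f g2 \<longrightarrow> g1 = g2)"

definition epi :: "('o, 'm) precat \<Rightarrow> 'o \<Rightarrow> 'o \<Rightarrow> 'm \<Rightarrow> bool" where
  "epi C A B f \<longleftrightarrow> f \<in> Hom C A B \<and>
     (\<forall>W\<in>Ob C. \<forall>g1\<in>Hom C B W. \<forall>g2\<in>Hom C B W. cmp C g1 f = cmp C g2 f \<longrightarrow> g1 = g2)"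

definition is_kernel :: "('o, 'm) precat \<Rightarrow> 'o \<Rightarrow> 'o \<Rightarrow> 'm \<Rightarrow> 'o \<Rightarrow> 'm \<Rightarrow> bool" where
  "is_kernel C A B f K k \<longleftrightarrow> K \<in> Ob C \<and> f \<in> Hom C A B \<and> k \<in> Hom C K A \<and>
     cmp C f k = mzero C K B \<and>
     (\<forall>W\<in>Ob C. \<forall>g\<in>Hom C W A. cmp C f g = mzero C W B \<longrightarrow> (\<exists>!u. u \<in> Hom C W K \<and> cmp C k u = g))"

definition is_cokernel :: "('o, 'm) precat \<Rightarrow> 'o \<Rightarrow> 'o \<Rightarrow> 'm \<Rightarrow> 'o \<Rightarrow> 'm \<Rightarrow> bool" where
  "is_cokernel C A B f Q c \<longleftrightarrow> Q \<in> Ob C \<and> f \<in> Hom C A B \<and> c \<in> Hom C B Q \<and>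
     cmp C c f = mzero C A Q \<and>
     (\<forall>W\<in>Ob C. \<forall>g\<in>Hom C B W. cmp C g f = mzero C A W \<longrightarrow> (\<exists>!u. u \<in> Hom C Q W \<and> cmp C u c = g))"

definition abelian :: "('o, 'm) precat \<Rightarrow> bool" where
  "abelian C \<longleftrightarrow> preadditive C \<and>
     (\<exists>Z. zero_object C Z) \<and>
     (\<forall>A\<in>Ob C. \<forall>B\<in>Ob C. \<exists>S i1 i2 p1 p2. biproduct C A B S i1 i2 p1 p2) \<and>
     (\<forall>A\<in>Ob C. \<forall>B\<in>Ob C. \<forall>f\<in>Hom C A B. (\<exists>K k. is_kernel C A B f K k) \<and> (\<exists>Q c. is_cokernel C A B f Q c)) \<and>
     (\<forall>A\<in>Ob C. \<forall>B\<in>Ob C. \<forall>f. mono C A B f \<longrightarrow> (\<exists>D\<in>Ob C. \<exists>g\<in>Hom C B D. is_kernel C B D g A f)) \<and>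
     (\<forall>A\<in>Ob C. \<forall>B\<in>Ob C. \<forall>f. epi C A B f \<longrightarrow> (\<exists>D\<in>Ob C. \<exists>g\<in>Hom C D A. is_cokernel C D A g B f))"

definition projective :: "('o, 'm) precat \<Rightarrow> 'o \<Rightarrow> bool" where
  "projective C P \<longleftrightarrow> P \<in> Ob C \<and>
     (\<forall>A\<in>Ob C. \<forall>B\<in>Ob C. \<forall>e. epi C A B e \<longrightarrow>
        (\<forall>g\<in>Hom C P B. \<exists>g'\<in>Hom C P A. cmp C e g' = g))"

definition additive_subcat_closed :: "('o, 'm) precat \<Rightarrow> 'o set \<Rightarrow> bool" where
  "additive_subcat_closed C \<T> \<longleftrightarrow> \<T> \<subseteq> Ob C \<and>
     (\<exists>Z\<in>\<T>. zero_object C Z) \<and>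
     (\<forall>A B S i1 i2 p1 p2. biproduct C A B S i1 i2 p1 p2 \<longrightarrow>
        ((A \<in> \<T> \<and> B \<in> \<T>) \<longrightarrow> S \<in> \<T>) \<and> (S \<in> \<T> \<longrightarrow> A \<in> \<T>))"

text \<open>g : A \<rightarrow> B lies in the ideal generated by \<T>, i.e. factors through an object of \<T>
  (since \<T> is closed under finite direct sums, this is the ideal generated by \<T>).\<close>
definition factors_through :: "('o, 'm) precat \<Rightarrow> 'o set \<Rightarrow> 'o \<Rightarrow> 'o \<Rightarrow> 'm \<Rightarrow> bool" where
  "factors_through C \<T> A B g \<longleftrightarrow>
     (\<exists>T\<in>\<T>. \<exists>a\<in>Hom C A T. \<exists>b\<in>Hom C T B. g = cmp C b a)"

text \<open>The class of f : A \<rightarrow> B is an epimorphism in the stable category A / \<langle>\<T>\<rangle>.\<close>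
definition stable_epi :: "('o, 'm) precat \<Rightarrow> 'o set \<Rightarrow> 'o \<Rightarrow> 'o \<Rightarrow> 'm \<Rightarrow> bool" where
  "stable_epi C \<T> A B f \<longleftrightarrow>
     (\<forall>Z\<in>Ob C. \<forall>g\<in>Hom C B Z. factors_through C \<T> A Z (cmp C g f) \<longrightarrow> factors_through C \<T> B Z g)"

definition preenvelope :: "('o, 'm) precat \<Rightarrow> 'o set \<Rightarrow> 'o \<Rightarrow> 'o \<Rightarrow> 'm \<Rightarrow> bool" where
  "preenvelope C \<T> X TX \<mu> \<longleftrightarrow> TX \<in> \<T> \<and> \<mu> \<in> Hom C X TX \<and>
     (\<forall>T\<in>\<T>. \<forall>h\<in>Hom C X T. \<exists>u\<in>Hom C TX T. cmp C u \<mu> = h)"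

definition covariantly_finite :: "('o, 'm) precat \<Rightarrow> 'o set \<Rightarrow> bool" where
  "covariantly_finite C \<T> \<longleftrightarrow> (\<forall>X\<in>Ob C. \<exists>TX \<mu>. preenvelope C \<T> X TX \<mu>)"

text \<open>Here ker f is given by any kernel \<kappa> : K \<rightarrow> X and h(ker f) by any image
  (epi-mono) factorization h\<kappa> = j e with j : I \<rightarrow> T; the condition is independent of
  these choices, and we require it for all of them.\<close>
definition coincides_on_kernel ::
  "('o, 'm) precat \<Rightarrow> 'o \<Rightarrow> 'o \<Rightarrow> 'm \<Rightarrow> 'o \<Rightarrow> 'm \<Rightarrow> bool" where
  "coincides_on_kernel C X Y f T h \<longleftrightarrow>
     (\<forall>K \<kappa>. is_kernel C X Y f K \<kappa> \<longrightarrow>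
       (\<forall>I e j. I \<in> Ob C \<and> epi C K I e \<and> mono C I T j \<and> cmp C h \<kappa> = cmp C j e \<longrightarrow>
          (\<exists>ht\<in>Hom C X I. cmp C j (cmp C ht \<kappa>) = cmp C h \<kappa>)))"

end

(*
  (1) => (2): let h : X -> T with T in \<T>, and let h \<kappa> = j e be an image factorization,
  \<kappa> a kernel of f.  The cokernel c of j kills h \<kappa>, so c h = g f for some g.  As g f
  factors through T, stability makes g factor through \<T>, and projectivity lifts g along
  the epimorphism c to some u : Y -> T.  Then c (h - u f) = 0, so h - u f = j h' for some h',
  and h' coincides with h on ker f because f \<kappa> = 0.

  (2) => (1): if g f = b a with a : X -> T and j h' \<kappa> = a \<kappa>, then a - j h' vanishes on
  ker f and hence equals u f, while b j e = g f \<kappa> = 0 forces b j = 0.  So g f = b u f and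
  g = b u.  This uses the coincidence only for one morphism a through which every morphism
  from X into \<T> factors, which is why a single preenvelope suffices for (3).
*)
theory Submission
  imports Defs
begin

locale preadditive_category =
  fixes C :: "('o, 'm) precat"
  assumes preadditive: "preadditive C"
begin

(* Hom C A B is unconstrained unless A and B are objects, so an arrow records both ends.
   The conclusions of the _arr lemmas repeat these premises; used as simp rules they loop. *)
abbreviation arr :: "'m \<Rightarrow> 'o \<Rightarrow> 'o \<Rightarrow> bool"  ("_ : _ \<rightarrow> _" [61, 61, 61] 50)
  where "f : A \<rightarrow> B \<equiv> A \<in> Ob C \<and> B \<in> Ob C \<and> f \<in> Hom C A B"

abbreviation comp :: "'m \<Rightarrow> 'm \<Rightarrow> 'm"  (infixr "\<cdot>" 75)
  where "g \<cdot> f \<equiv> cmp C g f"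

abbreviation add :: "'m \<Rightarrow> 'm \<Rightarrow> 'm"  (infixl "\<oplus>" 65)
  where "f \<oplus> g \<equiv> madd C f g"

abbreviation zero :: "'o \<Rightarrow> 'o \<Rightarrow> 'm"  ("\<zero>\<^bsub>_,_\<^esub>")
  where "\<zero>\<^bsub>A,B\<^esub> \<equiv> mzero C A B"

definition diff :: "'m \<Rightarrow> 'm \<Rightarrow> 'm"  (infixl "\<ominus>" 65)
  where "f \<ominus> g = f \<oplus> mneg C g"

lemma category: "category C"
  using preadditive unfolding preadditive_def by blast

lemma comp_arr: "f : A \<rightarrow> B \<Longrightarrow> g : B \<rightarrow> D \<Longrightarrow> g \<cdot> f : A \<rightarrow> D"
  using category unfolding category_def by blast

lemma comp_assoc: "f : A \<rightarrow> B \<Longrightarrow> g : B \<rightarrow> D \<Longrightarrow> h : D \<rightarrow> E \<Longrightarrow> (h \<cdot> g) \<cdot> f = h \<cdot> g \<cdot> f"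
  using category unfolding category_def by metis

lemma id_arr: "A \<in> Ob C \<Longrightarrow> idm C A : A \<rightarrow> A"
  using category unfolding category_def by blast

lemma comp_id_left: "f : A \<rightarrow> B \<Longrightarrow> idm C B \<cdot> f = f"
  using category unfolding category_def by blast

lemma comp_id_right: "f : A \<rightarrow> B \<Longrightarrow> f \<cdot> idm C A = f"
  using category unfolding category_def by blast

lemma zero_arr: "A \<in> Ob C \<Longrightarrow> B \<in> Ob C \<Longrightarrow> \<zero>\<^bsub>A,B\<^esub> : A \<rightarrow> B"
  using preadditive unfolding preadditive_def by blast

lemma add_arr: "f : A \<rightarrow> B \<Longrightarrow> g : A \<rightarrow> B \<Longrightarrow> f \<oplus> g : A \<rightarrow> B"
  and add_commute: "f : A \<rightarrow> B \<Longrightarrow> g : A \<rightarrow> B \<Longrightarrow> f \<oplus> g = g \<oplus> f"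
  and add_assoc: "f : A \<rightarrow> B \<Longrightarrow> g : A \<rightarrow> B \<Longrightarrow> h : A \<rightarrow> B \<Longrightarrow>
    (f \<oplus> g) \<oplus> h = f \<oplus> (g \<oplus> h)"
  and add_zero: "f : A \<rightarrow> B \<Longrightarrow> f \<oplus> \<zero>\<^bsub>A,B\<^esub> = f"
  and neg_arr: "f : A \<rightarrow> B \<Longrightarrow> mneg C f : A \<rightarrow> B"
  and add_neg: "f : A \<rightarrow> B \<Longrightarrow> f \<oplus> mneg C f = \<zero>\<^bsub>A,B\<^esub>"
  using preadditive unfolding preadditive_def by blast+

lemma comp_add_left: "f : A \<rightarrow> B \<Longrightarrow> f' : A \<rightarrow> B \<Longrightarrow> g : B \<rightarrow> D \<Longrightarrow>
    g \<cdot> (f \<oplus> f') = g \<cdot> f \<oplus> g \<cdot> f'"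
  and comp_add_right: "f : A \<rightarrow> B \<Longrightarrow> g : B \<rightarrow> D \<Longrightarrow> g' : B \<rightarrow> D \<Longrightarrow>
    (g \<oplus> g') \<cdot> f = g \<cdot> f \<oplus> g' \<cdot> f"
  using preadditive unfolding preadditive_def by blast+

lemma neg_unique:
  assumes f: "f : A \<rightarrow> B" and g: "g : A \<rightarrow> B" and sum: "f \<oplus> g = \<zero>\<^bsub>A,B\<^esub>"
  shows "g = mneg C f"
proof -
  have "g = g \<oplus> (f \<oplus> mneg C f)"
    by (simp add: add_neg[OF f] add_zero[OF g])
  also have "\<dots> = (g \<oplus> f) \<oplus> mneg C f"
    by (rule add_assoc[OF g f neg_arr[OF f], symmetric])
  also have "\<dots> = (f \<oplus> g) \<oplus> mneg C f"
    by (subst add_commute[OF g f]) (rule refl)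
  also have "\<dots> = mneg C f"
    using add_commute[OF zero_arr neg_arr[OF f]] add_zero[OF neg_arr[OF f]] f
    by (simp add: sum)
  finally show ?thesis .
qed

lemma zero_if_add_self:
  assumes f: "f : A \<rightarrow> B" and idem: "f \<oplus> f = f"
  shows "f = \<zero>\<^bsub>A,B\<^esub>"
proof -
  have "\<zero>\<^bsub>A,B\<^esub> = (f \<oplus> f) \<oplus> mneg C f"
    by (simp only: idem add_neg[OF f])
  also have "\<dots> = f"
    by (simp only: add_assoc[OF f f neg_arr[OF f]] add_neg[OF f] add_zero[OF f])
  finally show ?thesis ..
qed

lemma comp_zero_left:
  assumes f: "f : A \<rightarrow> B" and "D \<in> Ob C"
  shows "\<zero>\<^bsub>B,D\<^esub> \<cdot> f = \<zero>\<^bsub>A,D\<^esub>"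
proof (rule zero_if_add_self)
  have zero: "\<zero>\<^bsub>B,D\<^esub> : B \<rightarrow> D"
    using assms zero_arr by blast
  show "\<zero>\<^bsub>B,D\<^esub> \<cdot> f : A \<rightarrow> D"
    using comp_arr[OF f zero] .
  show "\<zero>\<^bsub>B,D\<^esub> \<cdot> f \<oplus> \<zero>\<^bsub>B,D\<^esub> \<cdot> f = \<zero>\<^bsub>B,D\<^esub> \<cdot> f"
    by (simp only: comp_add_right[OF f zero zero, symmetric] add_zero[OF zero])
qed

lemma comp_zero_right:
  assumes g: "g : B \<rightarrow> D" and "A \<in> Ob C"
  shows "g \<cdot> \<zero>\<^bsub>A,B\<^esub> = \<zero>\<^bsub>A,D\<^esub>"
proof (rule zero_if_add_self)
  have zero: "\<zero>\<^bsub>A,B\<^esub> : A \<rightarrow> B"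
    using assms zero_arr by blast
  show "g \<cdot> \<zero>\<^bsub>A,B\<^esub> : A \<rightarrow> D"
    using comp_arr[OF zero g] .
  show "g \<cdot> \<zero>\<^bsub>A,B\<^esub> \<oplus> g \<cdot> \<zero>\<^bsub>A,B\<^esub> = g \<cdot> \<zero>\<^bsub>A,B\<^esub>"
    by (simp only: comp_add_left[OF zero zero g, symmetric] add_zero[OF zero])
qed

lemma diff_arr: "f : A \<rightarrow> B \<Longrightarrow> g : A \<rightarrow> B \<Longrightarrow> f \<ominus> g : A \<rightarrow> B"
  unfolding diff_def by (rule add_arr[OF _ neg_arr])

lemma diff_self: "f : A \<rightarrow> B \<Longrightarrow> f \<ominus> f = \<zero>\<^bsub>A,B\<^esub>"
  unfolding diff_def by (rule add_neg)

lemma diff_zero: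
  assumes f: "f : A \<rightarrow> B"
  shows "f \<ominus> \<zero>\<^bsub>A,B\<^esub> = f"
proof -
  have zero: "\<zero>\<^bsub>A,B\<^esub> : A \<rightarrow> B"
    using f zero_arr by blast
  have "\<zero>\<^bsub>A,B\<^esub> = mneg C \<zero>\<^bsub>A,B\<^esub>"
    using neg_unique[OF zero zero add_zero[OF zero]] .
  then show ?thesis
    unfolding diff_def using add_zero[OF f] by simp
qed

lemma diff_eq_zero_iff:
  assumes f: "f : A \<rightarrow> B" and g: "g : A \<rightarrow> B"
  shows "f \<ominus> g = \<zero>\<^bsub>A,B\<^esub> \<longleftrightarrow> f = g"
proof
  assume "f \<ominus> g = \<zero>\<^bsub>A,B\<^esub>"
  then have "mneg C g \<oplus> f = \<zero>\<^bsub>A,B\<^esub>"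
    unfolding diff_def using add_commute[OF f neg_arr[OF g]] by simp
  then have "f = mneg C (mneg C g)"
    using neg_unique[OF neg_arr[OF g] f] by simp
  moreover have "mneg C g \<oplus> g = \<zero>\<^bsub>A,B\<^esub>"
    using add_commute[OF g neg_arr[OF g]] add_neg[OF g] by simp
  then have "g = mneg C (mneg C g)"
    using neg_unique[OF neg_arr[OF g] g] by simp
  ultimately show "f = g"
    by simp
qed (simp add: diff_self[OF g])

lemma comp_diff_left:
  assumes f: "f : A \<rightarrow> B" and g: "g : A \<rightarrow> B" and k: "k : B \<rightarrow> D"
  shows "k \<cdot> (f \<ominus> g) = k \<cdot> f \<ominus> k \<cdot> g"
proof -
  have "k \<cdot> g \<oplus> k \<cdot> mneg C g = \<zero>\<^bsub>A,D\<^esub>"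
    using comp_add_left[OF g neg_arr[OF g] k] add_neg[OF g] comp_zero_right[OF k] f by simp
  then have "k \<cdot> mneg C g = mneg C (k \<cdot> g)"
    using neg_unique[OF comp_arr[OF g k] comp_arr[OF neg_arr[OF g] k]] by simp
  then show ?thesis
    unfolding diff_def using comp_add_left[OF f neg_arr[OF g] k] by simp
qed

lemma comp_diff_right:
  assumes f: "f : B \<rightarrow> D" and g: "g : B \<rightarrow> D" and k: "k : A \<rightarrow> B"
  shows "(f \<ominus> g) \<cdot> k = f \<cdot> k \<ominus> g \<cdot> k"
proof -
  have "g \<cdot> k \<oplus> mneg C g \<cdot> k = \<zero>\<^bsub>A,D\<^esub>"
    using comp_add_right[OF k g neg_arr[OF g]] add_neg[OF g] comp_zero_left[OF k] f by simp
  then have "mneg C g \<cdot> k = mneg C (g \<cdot> k)"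
    using neg_unique[OF comp_arr[OF k g] comp_arr[OF k neg_arr[OF g]]] by simp
  then show ?thesis
    unfolding diff_def using comp_add_right[OF k f neg_arr[OF g]] by simp
qed

lemma mono_cancel: "mono C A B f \<Longrightarrow> g : W \<rightarrow> A \<Longrightarrow> g' : W \<rightarrow> A \<Longrightarrow> f \<cdot> g = f \<cdot> g' \<Longrightarrow> g = g'"
  unfolding mono_def by blast

lemma epi_cancel: "epi C A B f \<Longrightarrow> g : B \<rightarrow> W \<Longrightarrow> g' : B \<rightarrow> W \<Longrightarrow> g \<cdot> f = g' \<cdot> f \<Longrightarrow> g = g'"
  unfolding epi_def by blast

lemma projective_lift:
  "projective C P \<Longrightarrow> epi C A B e \<Longrightarrow> A \<in> Ob C \<Longrightarrow> B \<in> Ob C \<Longrightarrow> g \<in> Hom C P B \<Longrightarrow>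
    \<exists>g'. g' \<in> Hom C P A \<and> e \<cdot> g' = g"
  unfolding projective_def by blast

lemma kernelD:
  assumes "is_kernel C A B f K k" "A \<in> Ob C" "B \<in> Ob C"
  shows "k : K \<rightarrow> A" "f : A \<rightarrow> B" "f \<cdot> k = \<zero>\<^bsub>K,B\<^esub>"
  using assms unfolding is_kernel_def by blast+

lemma kernel_lift_unique:
  assumes "is_kernel C A B f K k" "g : W \<rightarrow> A" "f \<cdot> g = \<zero>\<^bsub>W,B\<^esub>"
  shows "\<exists>!u. u \<in> Hom C W K \<and> k \<cdot> u = g"
  using assms unfolding is_kernel_def by blast

lemma kernel_lift:
  assumes "is_kernel C A B f K k" "g : W \<rightarrow> A" "f \<cdot> g = \<zero>\<^bsub>W,B\<^esub>"
  shows "\<exists>u. u : W \<rightarrow> K \<and> k \<cdot> u = g"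
proof -
  have "K \<in> Ob C"
    using assms(1) unfolding is_kernel_def by blast
  then show ?thesis
    using kernel_lift_unique[OF assms] assms(2) by blast
qed

lemma cokernelD:
  assumes "is_cokernel C A B f Q c" "A \<in> Ob C" "B \<in> Ob C"
  shows "c : B \<rightarrow> Q" "f : A \<rightarrow> B" "c \<cdot> f = \<zero>\<^bsub>A,Q\<^esub>"
  using assms unfolding is_cokernel_def by blast+

lemma cokernel_desc_unique:
  assumes "is_cokernel C A B f Q c" "g : B \<rightarrow> W" "g \<cdot> f = \<zero>\<^bsub>A,W\<^esub>"
  shows "\<exists>!u. u \<in> Hom C Q W \<and> u \<cdot> c = g"
  using assms unfolding is_cokernel_def by blast

lemma cokernel_desc:
  assumes "is_cokernel C A B f Q c" "g : B \<rightarrow> W" "g \<cdot> f = \<zero>\<^bsub>A,W\<^esub>"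
  shows "\<exists>u. u : Q \<rightarrow> W \<and> u \<cdot> c = g"
proof -
  have "Q \<in> Ob C"
    using assms(1) unfolding is_cokernel_def by blast
  then show ?thesis
    using cokernel_desc_unique[OF assms] assms(2) by blast
qed

lemma kernel_mono:
  assumes k: "is_kernel C A B f K k" and "A \<in> Ob C" "B \<in> Ob C"
  shows "mono C K A k"
  unfolding mono_def
proof (intro conjI ballI impI)
  note k_arr = kernelD(1)[OF assms] and f = kernelD(2)[OF assms]
  show "k \<in> Hom C K A"
    using k_arr by blast
  fix W u v
  assume "W \<in> Ob C" "u \<in> Hom C W K" "v \<in> Hom C W K" and kuv: "k \<cdot> u = k \<cdot> v"
  then have u: "u : W \<rightarrow> K" and v: "v : W \<rightarrow> K"
    using k_arr by blast+
  have "f \<cdot> k \<cdot> u = \<zero>\<^bsub>W,B\<^esub>"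
    using comp_assoc[OF u k_arr f] kernelD(3)[OF assms] comp_zero_left[OF u] f by simp
  then have "\<exists>!w. w \<in> Hom C W K \<and> k \<cdot> w = k \<cdot> u"
    by (rule kernel_lift_unique[OF k comp_arr[OF u k_arr]])
  then show "u = v"
    using u v kuv by metis
qed

lemma cokernel_epi:
  assumes c: "is_cokernel C A B f Q c" and "A \<in> Ob C" "B \<in> Ob C"
  shows "epi C B Q c"
  unfolding epi_def
proof (intro conjI ballI impI)
  note c_arr = cokernelD(1)[OF assms] and f = cokernelD(2)[OF assms]
  show "c \<in> Hom C B Q"
    using c_arr by blast
  fix W u v
  assume "W \<in> Ob C" "u \<in> Hom C Q W" "v \<in> Hom C Q W" and ucv: "u \<cdot> c = v \<cdot> c"
  then have u: "u : Q \<rightarrow> W" and v: "v : Q \<rightarrow> W"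
    using c_arr by blast+
  have "(u \<cdot> c) \<cdot> f = \<zero>\<^bsub>A,W\<^esub>"
    using comp_assoc[OF f c_arr u] cokernelD(3)[OF assms] comp_zero_right[OF u] f by simp
  then have "\<exists>!w. w \<in> Hom C Q W \<and> w \<cdot> c = u \<cdot> c"
    by (rule cokernel_desc_unique[OF c comp_arr[OF c_arr u]])
  then show "u = v"
    using u v ucv by metis
qed

lemma mono_comp:
  assumes f: "mono C A B f" and g: "mono C B D g" and "A \<in> Ob C" "B \<in> Ob C" "D \<in> Ob C"
  shows "mono C A D (g \<cdot> f)"
  unfolding mono_def
proof (intro conjI ballI impI)
  have f_arr: "f : A \<rightarrow> B" and g_arr: "g : B \<rightarrow> D"
    using assms unfolding mono_def by blast+
  then show "g \<cdot> f \<in> Hom C A D"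
    using comp_arr by blast
  fix W u v
  assume "W \<in> Ob C" "u \<in> Hom C W A" "v \<in> Hom C W A" and "(g \<cdot> f) \<cdot> u = (g \<cdot> f) \<cdot> v"
  moreover have u: "u : W \<rightarrow> A" and v: "v : W \<rightarrow> A"
    using calculation f_arr by blast+
  ultimately have "g \<cdot> f \<cdot> u = g \<cdot> f \<cdot> v"
    using comp_assoc[OF u f_arr g_arr] comp_assoc[OF v f_arr g_arr] by simp
  then have "f \<cdot> u = f \<cdot> v"
    using mono_cancel[OF g comp_arr[OF u f_arr] comp_arr[OF v f_arr]] by blast
  then show "u = v"
    using mono_cancel[OF f u v] by blast
qed

lemma epi_if_cokernel_zero:
  assumes q: "is_cokernel C A B e Q q" and e: "e : A \<rightarrow> B" and q_zero: "q = \<zero>\<^bsub>B,Q\<^esub>"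
  shows "epi C A B e"
  unfolding epi_def
proof (intro conjI ballI impI)
  show "e \<in> Hom C A B"
    using e by blast
  fix W u v
  assume "W \<in> Ob C" "u \<in> Hom C B W" "v \<in> Hom C B W" and uv: "u \<cdot> e = v \<cdot> e"
  then have u: "u : B \<rightarrow> W" and v: "v : B \<rightarrow> W"
    using e by blast+
  have "(u \<ominus> v) \<cdot> e = \<zero>\<^bsub>A,W\<^esub>"
    using comp_diff_right[OF u v e] uv diff_self[OF comp_arr[OF e v]] by simp
  then obtain t where t: "t : Q \<rightarrow> W" "t \<cdot> q = u \<ominus> v"
    using cokernel_desc[OF q diff_arr[OF u v]] by blast
  then have "u \<ominus> v = \<zero>\<^bsub>B,W\<^esub>"
    using comp_zero_right[OF t(1)] e q_zero by simp
  then show "u = v"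
    using diff_eq_zero_iff[OF u v] by blast
qed

end

locale abelian_category =
  fixes C :: "('o, 'm) precat"
  assumes abelian: "abelian C"

sublocale abelian_category \<subseteq> preadditive_category
  using abelian unfolding abelian_def by unfold_locales blast

context abelian_category
begin

lemma kernel_exists: "f : A \<rightarrow> B \<Longrightarrow> \<exists>K k. is_kernel C A B f K k"
  using abelian unfolding abelian_def by blast

lemma cokernel_exists: "f : A \<rightarrow> B \<Longrightarrow> \<exists>Q c. is_cokernel C A B f Q c"
  using abelian unfolding abelian_def by blast

lemma mono_is_kernel:
  "mono C A B f \<Longrightarrow> A \<in> Ob C \<Longrightarrow> B \<in> Ob C \<Longrightarrow> \<exists>D g. g : B \<rightarrow> D \<and> is_kernel C B D g A f"
  using abelian unfolding abelian_def by blast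

lemma epi_is_cokernel:
  "epi C A B f \<Longrightarrow> A \<in> Ob C \<Longrightarrow> B \<in> Ob C \<Longrightarrow> \<exists>D g. g : D \<rightarrow> A \<and> is_cokernel C D A g B f"
  using abelian unfolding abelian_def by blast

lemma factor_through_epi:
  assumes f: "epi C X Y f" "X \<in> Ob C" "Y \<in> Ob C" and \<kappa>: "is_kernel C X Y f K \<kappa>"
    and u: "u : X \<rightarrow> W" and u\<kappa>: "u \<cdot> \<kappa> = \<zero>\<^bsub>K,W\<^esub>"
  shows "\<exists>v. v : Y \<rightarrow> W \<and> v \<cdot> f = u"
proof -
  obtain D g where g: "g : D \<rightarrow> X" "is_cokernel C D X g Y f"
    using epi_is_cokernel[OF f] by blast
  note \<kappa>_arr = kernelD(1)[OF \<kappa> f(2,3)]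
  have "f \<cdot> g = \<zero>\<^bsub>D,Y\<^esub>"
    using cokernelD(3)[OF g(2)] g(1) by blast
  then obtain w where w: "w : D \<rightarrow> K" "\<kappa> \<cdot> w = g"
    using kernel_lift[OF \<kappa> g(1)] by blast
  have "u \<cdot> g = \<zero>\<^bsub>D,W\<^esub>"
    using comp_assoc[OF w(1) \<kappa>_arr u] u\<kappa> comp_zero_left[OF w(1)] u w(2) by simp
  then show ?thesis
    using cokernel_desc[OF g(2) u] by blast
qed

lemma factor_through_mono:
  assumes n: "mono C N T n" "N \<in> Ob C" "T \<in> Ob C" and p: "is_cokernel C N T n P p"
    and w: "w : W \<rightarrow> T" and pw: "p \<cdot> w = \<zero>\<^bsub>W,P\<^esub>"
  shows "\<exists>v. v : W \<rightarrow> N \<and> n \<cdot> v = w"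
proof -
  obtain D g where g: "g : T \<rightarrow> D" "is_kernel C T D g N n"
    using mono_is_kernel[OF n] by blast
  note p_arr = cokernelD(1)[OF p n(2,3)]
  have "g \<cdot> n = \<zero>\<^bsub>N,D\<^esub>"
    using kernelD(3)[OF g(2)] g(1) by blast
  then obtain t where t: "t : P \<rightarrow> D" "t \<cdot> p = g"
    using cokernel_desc[OF p g(1)] by blast
  have "g \<cdot> w = \<zero>\<^bsub>W,D\<^esub>"
    using comp_assoc[OF w p_arr t(1)] pw comp_zero_right[OF t(1)] w t(2) by simp
  then show ?thesis
    using kernel_lift[OF g(2) w] by blast
qed

lemma image_factors_through_mono:
  assumes c: "is_cokernel C K T m Q c" and j: "is_kernel C T Q c I j"
    and n: "mono C N T n" and e: "e : K \<rightarrow> N" and m: "m = n \<cdot> e" and T: "T \<in> Ob C"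
  shows "\<exists>v. v : I \<rightarrow> N \<and> n \<cdot> v = j"
proof -
  have n_arr: "n : N \<rightarrow> T"
    using n T e unfolding mono_def by blast
  note c_arr = cokernelD(1)[OF c _ T] and c_m = cokernelD(3)[OF c _ T]
  note j_arr = kernelD(1)[OF j T] and c_j = kernelD(3)[OF j T]
  obtain P p where p: "is_cokernel C N T n P p"
    using cokernel_exists[OF n_arr] by blast
  note p_arr = cokernelD(1)[OF p _ T] and p_n = cokernelD(3)[OF p _ T]
  have "p \<cdot> m = \<zero>\<^bsub>K,P\<^esub>"
    using comp_assoc[OF e n_arr p_arr] p_n comp_zero_left[OF e] e p_arr m by simp
  then obtain t where t: "t : Q \<rightarrow> P" "t \<cdot> c = p"
    using cokernel_desc[OF c p_arr] e by blast
  have "p \<cdot> j = \<zero>\<^bsub>I,P\<^esub>"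
    using comp_assoc[OF j_arr c_arr t(1)] c_j comp_zero_right[OF t(1)] e c_arr j_arr t(2) by simp
  then show ?thesis
    using factor_through_mono[OF n _ T p j_arr] n_arr e c_arr by blast
qed

(* j is the kernel of the cokernel of m; e is epi because its cokernel q vanishes: the kernel k
   of q is a split epimorphism, since j factors through the monomorphism j k. *)
lemma image_factorization:
  assumes m: "m : K \<rightarrow> T"
  shows "\<exists>I e j. I \<in> Ob C \<and> epi C K I e \<and> mono C I T j \<and> m = j \<cdot> e"
proof -
  have K: "K \<in> Ob C" and T: "T \<in> Ob C"
    using m by blast+
  obtain Q c where c: "is_cokernel C K T m Q c"
    using cokernel_exists[OF m] by blast
  note c_arr = cokernelD(1)[OF c K T]
  then obtain I j where j: "is_kernel C T Q c I j"
    using kernel_exists by blast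
  have Q: "Q \<in> Ob C"
    using c_arr by blast
  note j_arr = kernelD(1)[OF j T Q] and j_mono = kernel_mono[OF j T Q]
  obtain e where e: "e : K \<rightarrow> I" "j \<cdot> e = m"
    using kernel_lift[OF j m cokernelD(3)[OF c K T]] by blast
  have I: "I \<in> Ob C"
    using j_arr by blast
  obtain R q where q: "is_cokernel C K I e R q"
    using cokernel_exists[OF e(1)] by blast
  note q_arr = cokernelD(1)[OF q K I]
  then obtain N k where k: "is_kernel C I R q N k"
    using kernel_exists by blast
  have R: "R \<in> Ob C"
    using q_arr by blast
  note k_arr = kernelD(1)[OF k I R]
  obtain e' where e': "e' : K \<rightarrow> N" "k \<cdot> e' = e"
    using kernel_lift[OF k e(1) cokernelD(3)[OF q K I]] by blast
  have jk_mono: "mono C N T (j \<cdot> k)"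
    using mono_comp[OF kernel_mono[OF k I R] j_mono] k_arr j_arr by blast
  have "m = (j \<cdot> k) \<cdot> e'"
    using comp_assoc[OF e'(1) k_arr j_arr] e e' by simp
  then obtain v where v: "v : I \<rightarrow> N" "(j \<cdot> k) \<cdot> v = j"
    using image_factors_through_mono[OF c j jk_mono e'(1) _ T] by blast
  have "j \<cdot> k \<cdot> v = j \<cdot> idm C I"
    using comp_assoc[OF v(1) k_arr j_arr] comp_id_right[OF j_arr] v by simp
  then have kv: "k \<cdot> v = idm C I"
    using mono_cancel[OF j_mono comp_arr[OF v(1) k_arr] id_arr[OF I]] by blast
  have "q = q \<cdot> k \<cdot> v"
    using comp_id_right[OF q_arr] kv by simp
  also have "\<dots> = \<zero>\<^bsub>I,R\<^esub>"
    using comp_assoc[OF v(1) k_arr q_arr] kernelD(3)[OF k I R] comp_zero_left[OF v(1) R] by simp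
  finally have "epi C K I e"
    using epi_if_cokernel_zero[OF q e(1)] by blast
  then show ?thesis
    using I j_mono e by blast
qed

lemma stable_epi_lift_along_epi:
  assumes st: "stable_epi C \<T> X Y f" and proj: "\<forall>P\<in>\<T>. projective C P" and "\<T> \<subseteq> Ob C"
    and h: "h \<in> Hom C X T" "T \<in> \<T>" and c: "epi C T Q c" "Q \<in> Ob C"
    and g: "g : Y \<rightarrow> Q" and gf: "g \<cdot> f = c \<cdot> h"
  shows "\<exists>u. u : Y \<rightarrow> T \<and> c \<cdot> u = g"
proof -
  have c_hom: "c \<in> Hom C T Q"
    using c(1) unfolding epi_def by blast
  then have "factors_through C \<T> X Q (g \<cdot> f)"
    unfolding factors_through_def gf using h by blast
  then have "factors_through C \<T> Y Q g"
    using st c(2) g unfolding stable_epi_def by blast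
  then obtain T' a b where T': "T' \<in> \<T>" "a \<in> Hom C Y T'" "b \<in> Hom C T' Q" and g_eq: "g = b \<cdot> a"
    unfolding factors_through_def by blast
  have T_ob: "T \<in> Ob C" "T' \<in> Ob C"
    using assms(3) h T' by blast+
  obtain b' where b': "b' \<in> Hom C T' T" "c \<cdot> b' = b"
    using projective_lift[of T' T Q c b] proj T' c T_ob by blast
  have a_arr: "a : Y \<rightarrow> T'" and b'_arr: "b' : T' \<rightarrow> T" and c_arr: "c : T \<rightarrow> Q"
    using T_ob T' g b' c_hom by blast+
  have "c \<cdot> b' \<cdot> a = g"
    using comp_assoc[OF a_arr b'_arr c_arr] b'(2) g_eq by simp
  then show ?thesis
    using comp_arr[OF a_arr b'_arr] by blast
qed

lemma coincides_on_kernel_if_stable_epi: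
  assumes f: "epi C X Y f" "X \<in> Ob C" "Y \<in> Ob C" and st: "stable_epi C \<T> X Y f"
    and proj: "\<forall>P\<in>\<T>. projective C P" and "\<T> \<subseteq> Ob C" and h: "h \<in> Hom C X T" "T \<in> \<T>"
  shows "coincides_on_kernel C X Y f T h"
  unfolding coincides_on_kernel_def
proof (intro allI impI, elim conjE)
  fix K \<kappa> I e j
  assume \<kappa>: "is_kernel C X Y f K \<kappa>" and I: "I \<in> Ob C" and e: "epi C K I e"
    and j: "mono C I T j" and h\<kappa>: "h \<cdot> \<kappa> = j \<cdot> e"
  have T: "T \<in> Ob C"
    using h \<open>\<T> \<subseteq> Ob C\<close> by blast
  have h_arr: "h : X \<rightarrow> T" and e_arr: "e : K \<rightarrow> I" and j_arr: "j : I \<rightarrow> T"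
    using f h T I e j kernelD(1)[OF \<kappa> f(2,3)] unfolding epi_def mono_def by blast+
  note \<kappa>_arr = kernelD(1)[OF \<kappa> f(2,3)] and f\<kappa> = kernelD(3)[OF \<kappa> f(2,3)]
  obtain Q c where c: "is_cokernel C I T j Q c"
    using cokernel_exists[OF j_arr] by blast
  note c_arr = cokernelD(1)[OF c I T]
  have "(c \<cdot> h) \<cdot> \<kappa> = (c \<cdot> j) \<cdot> e"
    using comp_assoc[OF \<kappa>_arr h_arr c_arr] comp_assoc[OF e_arr j_arr c_arr] h\<kappa> by simp
  also have "\<dots> = \<zero>\<^bsub>K,Q\<^esub>"
    using cokernelD(3)[OF c I T] comp_zero_left[OF e_arr] c_arr by simp
  finally obtain g where g: "g : Y \<rightarrow> Q" "g \<cdot> f = c \<cdot> h"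
    using factor_through_epi[OF f \<kappa> comp_arr[OF h_arr c_arr]] by blast
  then obtain u where u: "u : Y \<rightarrow> T" "c \<cdot> u = g"
    using stable_epi_lift_along_epi[OF st proj \<open>\<T> \<subseteq> Ob C\<close> h cokernel_epi[OF c I T]] c_arr by blast
  have f_arr: "f : X \<rightarrow> Y"
    using f unfolding epi_def by blast
  note uf_arr = comp_arr[OF f_arr u(1)]
  have "c \<cdot> (h \<ominus> u \<cdot> f) = c \<cdot> h \<ominus> (c \<cdot> u) \<cdot> f"
    using comp_diff_left[OF h_arr uf_arr c_arr] comp_assoc[OF f_arr u(1) c_arr] by simp
  also have "\<dots> = \<zero>\<^bsub>X,Q\<^esub>"
    using diff_self[OF comp_arr[OF h_arr c_arr]] u(2) g(2) by simp
  finally obtain h' where h': "h' : X \<rightarrow> I" "j \<cdot> h' = h \<ominus> u \<cdot> f"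
    using factor_through_mono[OF j I T c diff_arr[OF h_arr uf_arr]] by blast
  have "j \<cdot> h' \<cdot> \<kappa> = (h \<ominus> u \<cdot> f) \<cdot> \<kappa>"
    using comp_assoc[OF \<kappa>_arr h'(1) j_arr] h'(2) by simp
  also have "\<dots> = h \<cdot> \<kappa> \<ominus> u \<cdot> f \<cdot> \<kappa>"
    using comp_diff_right[OF h_arr uf_arr \<kappa>_arr] comp_assoc[OF \<kappa>_arr f_arr u(1)] by simp
  also have "\<dots> = h \<cdot> \<kappa>"
    using f\<kappa> comp_zero_right[OF u(1)] diff_zero[OF comp_arr[OF \<kappa>_arr h_arr]] \<kappa>_arr by simp
  finally show "\<exists>h'\<in>Hom C X I. j \<cdot> h' \<cdot> \<kappa> = h \<cdot> \<kappa>"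
    using h'(1) by blast
qed

lemma coincides_on_kernel_lift:
  assumes f: "epi C X Y f" "X \<in> Ob C" "Y \<in> Ob C"
    and a: "a : X \<rightarrow> T" and coin: "coincides_on_kernel C X Y f T a"
    and b: "b : T \<rightarrow> Z" and g: "g : Y \<rightarrow> Z" and gf: "g \<cdot> f = b \<cdot> a"
  shows "\<exists>u. u : Y \<rightarrow> T \<and> b \<cdot> u = g"
proof -
  have f_arr: "f : X \<rightarrow> Y"
    using f unfolding epi_def by blast
  obtain K \<kappa> where \<kappa>: "is_kernel C X Y f K \<kappa>"
    using kernel_exists[OF f_arr] by blast
  note \<kappa>_arr = kernelD(1)[OF \<kappa> f(2,3)] and f\<kappa> = kernelD(3)[OF \<kappa> f(2,3)]
  obtain I e j where I: "I \<in> Ob C" and e: "epi C K I e" and j: "mono C I T j"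
    and a\<kappa>: "a \<cdot> \<kappa> = j \<cdot> e"
    using image_factorization[OF comp_arr[OF \<kappa>_arr a]] by blast
  have e_arr: "e : K \<rightarrow> I" and j_arr: "j : I \<rightarrow> T"
    using e j I a \<kappa>_arr unfolding epi_def mono_def by blast+
  obtain h' where h': "h' \<in> Hom C X I" "j \<cdot> h' \<cdot> \<kappa> = a \<cdot> \<kappa>"
    using coin \<kappa> I e j a\<kappa> unfolding coincides_on_kernel_def by blast
  then have h'_arr: "h' : X \<rightarrow> I"
    using f I by blast
  note jh'_arr = comp_arr[OF h'_arr j_arr]
  have "(a \<ominus> j \<cdot> h') \<cdot> \<kappa> = a \<cdot> \<kappa> \<ominus> j \<cdot> h' \<cdot> \<kappa>"
    using comp_diff_right[OF a jh'_arr \<kappa>_arr] comp_assoc[OF \<kappa>_arr h'_arr j_arr] by simp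
  also have "\<dots> = \<zero>\<^bsub>K,T\<^esub>"
    using diff_self[OF comp_arr[OF \<kappa>_arr a]] h'(2) by simp
  finally obtain u where u: "u : Y \<rightarrow> T" "u \<cdot> f = a \<ominus> j \<cdot> h'"
    using factor_through_epi[OF f \<kappa> diff_arr[OF a jh'_arr]] by blast
  have "(b \<cdot> j) \<cdot> e = (g \<cdot> f) \<cdot> \<kappa>"
    using comp_assoc[OF e_arr j_arr b] comp_assoc[OF \<kappa>_arr a b] a\<kappa> gf by simp
  also have "\<dots> = \<zero>\<^bsub>I,Z\<^esub> \<cdot> e"
    using comp_assoc[OF \<kappa>_arr f_arr g] f\<kappa> comp_zero_right[OF g] comp_zero_left[OF e_arr] \<kappa>_arr g
    by simp
  finally have bj: "b \<cdot> j = \<zero>\<^bsub>I,Z\<^esub>"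
    using epi_cancel[OF e comp_arr[OF j_arr b] zero_arr] I g by blast
  have "(b \<cdot> u) \<cdot> f = b \<cdot> a \<ominus> (b \<cdot> j) \<cdot> h'"
    using comp_assoc[OF f_arr u(1) b] u(2) comp_diff_left[OF a jh'_arr b] comp_assoc[OF h'_arr j_arr b]
    by simp
  also have "\<dots> = g \<cdot> f"
    using bj comp_zero_left[OF h'_arr] diff_zero[OF comp_arr[OF a b]] gf g by simp
  finally have "b \<cdot> u = g"
    using epi_cancel[OF f(1) comp_arr[OF u(1) b] g] by blast
  then show ?thesis
    using u(1) by blast
qed

lemma stable_epi_if_factors_through_coinciding:
  assumes f: "epi C X Y f" "X \<in> Ob C" "Y \<in> Ob C" and "\<T> \<subseteq> Ob C"
    and factors: "\<And>T' h. T' \<in> \<T> \<Longrightarrow> h \<in> Hom C X T' \<Longrightarrow>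
      \<exists>T a v. T \<in> \<T> \<and> a \<in> Hom C X T \<and> v \<in> Hom C T T' \<and> coincides_on_kernel C X Y f T a \<and> h = v \<cdot> a"
  shows "stable_epi C \<T> X Y f"
  unfolding stable_epi_def
proof (intro ballI impI)
  fix Z g
  assume Z: "Z \<in> Ob C" and g: "g \<in> Hom C Y Z" and "factors_through C \<T> X Z (g \<cdot> f)"
  then obtain T' h b where T': "T' \<in> \<T>" "h \<in> Hom C X T'" "b \<in> Hom C T' Z" and gf: "g \<cdot> f = b \<cdot> h"
    unfolding factors_through_def by blast
  obtain T a v where T: "T \<in> \<T>" "a \<in> Hom C X T" "v \<in> Hom C T T'"
    and coin: "coincides_on_kernel C X Y f T a" and h: "h = v \<cdot> a"
    using factors[OF T'(1,2)] by blast
  have a: "a : X \<rightarrow> T" and v: "v : T \<rightarrow> T'" and b: "b : T' \<rightarrow> Z"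
    using T T' Z f \<open>\<T> \<subseteq> Ob C\<close> by blast+
  have "g \<cdot> f = (b \<cdot> v) \<cdot> a"
    using gf h comp_assoc[OF a v b] by simp
  then obtain u where "u : Y \<rightarrow> T" "(b \<cdot> v) \<cdot> u = g"
    using coincides_on_kernel_lift[OF f a coin comp_arr[OF v b]] g Z f by blast
  then show "factors_through C \<T> Y Z g"
    unfolding factors_through_def using T(1) comp_arr[OF v b] by blast
qed

lemma stable_epi_iff_coincides_on_kernel:
  assumes f: "epi C X Y f" "X \<in> Ob C" "Y \<in> Ob C"
    and "\<T> \<subseteq> Ob C" and proj: "\<forall>P\<in>\<T>. projective C P"
  shows "stable_epi C \<T> X Y f \<longleftrightarrow> (\<forall>T\<in>\<T>. \<forall>h\<in>Hom C X T. coincides_on_kernel C X Y f T h)"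
proof
  show "stable_epi C \<T> X Y f \<Longrightarrow> \<forall>T\<in>\<T>. \<forall>h\<in>Hom C X T. coincides_on_kernel C X Y f T h"
    using coincides_on_kernel_if_stable_epi[OF f _ proj \<open>\<T> \<subseteq> Ob C\<close>] by blast
next
  assume coin: "\<forall>T\<in>\<T>. \<forall>h\<in>Hom C X T. coincides_on_kernel C X Y f T h"
  show "stable_epi C \<T> X Y f"
  proof (rule stable_epi_if_factors_through_coinciding[OF f \<open>\<T> \<subseteq> Ob C\<close>])
    fix T h
    assume "T \<in> \<T>" "h \<in> Hom C X T"
    moreover have "idm C T \<cdot> h = h" "idm C T \<in> Hom C T T"
      using calculation f \<open>\<T> \<subseteq> Ob C\<close> comp_id_left id_arr by blast+
    ultimately show "\<exists>T' a v. T' \<in> \<T> \<and> a \<in> Hom C X T' \<and> v \<in> Hom C T' T \<and>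
        coincides_on_kernel C X Y f T' a \<and> h = v \<cdot> a"
      using coin by metis
  qed
qed

lemma stable_epi_iff_preenvelope_coincides_on_kernel:
  assumes f: "epi C X Y f" "X \<in> Ob C" "Y \<in> Ob C"
    and "\<T> \<subseteq> Ob C" and proj: "\<forall>P\<in>\<T>. projective C P"
    and \<mu>: "preenvelope C \<T> X TX \<mu>"
  shows "stable_epi C \<T> X Y f \<longleftrightarrow> coincides_on_kernel C X Y f TX \<mu>"
proof
  show "stable_epi C \<T> X Y f \<Longrightarrow> coincides_on_kernel C X Y f TX \<mu>"
    using coincides_on_kernel_if_stable_epi[OF f _ proj \<open>\<T> \<subseteq> Ob C\<close>] \<mu>
    unfolding preenvelope_def by blast
next
  assume "coincides_on_kernel C X Y f TX \<mu>"
  then show "stable_epi C \<T> X Y f"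
    using stable_epi_if_factors_through_coinciding[OF f \<open>\<T> \<subseteq> Ob C\<close>] \<mu>
    unfolding preenvelope_def by metis
qed

end

theorem proposition4p2:
  fixes C :: "('o, 'm) precat" and \<T> :: "'o set"
  assumes "abelian C"
    and "additive_subcat_closed C \<T>"
    and "\<forall>P\<in>\<T>. projective C P"
    and "X \<in> Ob C" and "Y \<in> Ob C"
    and "epi C X Y f"
  shows "(stable_epi C \<T> X Y f \<longleftrightarrow>
            (\<forall>T\<in>\<T>. \<forall>h\<in>Hom C X T. coincides_on_kernel C X Y f T h))
       \<and> (covariantly_finite C \<T> \<longrightarrow>
            (stable_epi C \<T> X Y f \<longleftrightarrow>
               (\<forall>TX \<mu>. preenvelope C \<T> X TX \<mu> \<longrightarrow> coincides_on_kernel C X Y f TX \<mu>))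
          \<and> (stable_epi C \<T> X Y f \<longleftrightarrow>
               (\<exists>TX \<mu>. preenvelope C \<T> X TX \<mu> \<and> coincides_on_kernel C X Y f TX \<mu>)))"
proof -
  interpret abelian_category C
    by unfold_locales (rule assms(1))
  have "\<T> \<subseteq> Ob C"
    using assms(2) unfolding additive_subcat_closed_def by blast
  note iff_preenvelope =
    stable_epi_iff_preenvelope_coincides_on_kernel[OF assms(6,4,5) \<open>\<T> \<subseteq> Ob C\<close> assms(3)]
  have "covariantly_finite C \<T> \<Longrightarrow> \<exists>TX \<mu>. preenvelope C \<T> X TX \<mu>"
    using assms(4) unfolding covariantly_finite_def by blast
  then show ?thesis
    using stable_epi_iff_coincides_on_kernel[OF assms(6,4,5) \<open>\<T> \<subseteq> Ob C\<close> assms(3)] iff_preenvelope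
    by blast
qed

end
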